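(* Let $R$ be a division ring with center $C$, let $\{I_{a,b}\}_{a,b\in\mathbb{Z}_{\ge0}}\subseteq R$, and let $\{p_k(x)\}_{k\ge0}\subseteq R[x]$, $\{q_k(y)\}_{k\ge0}\subseteq R[y]$ be biorthonormal with respect to $\{I_{a,b}\}$, with $p_k$ and $q_k$ of degree exactly $k$. Suppose there are polynomials $f(x)=\sum_{i=0}^n a_i x^i$ and $g(y)=\sum_{j=0}^m y^j b_j$ with $a_i,b_j\in C$, and elements $\alpha_r,\beta_s\in R$, such that $$\sum_{i=0}^n a_i I_{r+i,s}+\sum_{j=0}^m I_{r,s+j}b_j=\alpha_r\beta_s\quad\text{for all } r,s\ge 0.$$ Writing $p_k(x)=\sum_{i=0}^k c^{(k)}_i x^i$ and $q_k(y)=\sum_{i=0}^k y^i d^{(k)}_i$, set $\pi_k=\sum_{i=0}^k c^{(k)}_i\alpha_i$ and $\eta_k=\sum_{i=0}^k \beta_i d^{(k)}_i$, and assume all $\pi_k,\eta_k$ are nonzero. Then $p_k$ and $q_k$ satisfy $(n+m+2)$-term recurrence relations: for every $k\ge1$ there exist elements $A_{k,i},B_{k,i}\in R$ such that $$\big(\pi_k^{-1}p_k(x)-\pi_{k-1}^{-1}p_{k-1}(x)\big)f(x)=\sum_{i=k-1-m}^{k+n}A_{k,i}\,p_i(x),$$ $$g(y)\big(q_k(y)\eta_k^{-1}-q_{k-1}(y)\eta_{k-1}^{-1}\big)=\sum_{i=k-1-n}^{k+m}q_i(y)\,B_{k,i},$$ where terms with negative index are omitted.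
   Context: Elements of $R[x]$ are written $\sum_i a_i x^i$ and elements of $R[y]$ as $\sum_j y^j b_j$; $x$ and $y$ commute with elements of $C$. The pairing $\langle\cdot,\cdot\rangle:R[x]\times R[y]\to R$ determined by the bimoments is $\langle \sum_i a_i x^i,\sum_j y^j b_j\rangle=\sum_{i,j}a_iI_{i,j}b_j$. The sequences are biorthonormal if $\langle p_k,q_l\rangle=0$ for $k\neq l$ and $\langle p_k,q_k\rangle=1$ for all $k$. *)

theory Defs
  imports Main
begin

text \<open>Polynomials in one variable (x or y) commuting with the coefficients are represented
  by their coefficient sequences nat \<Rightarrow> 'a.  For p(x) = sum c_i x^i the coefficients are
  written on the left, for q(y) = sum y^i d_i on the right; in both cases the product
  of two such polynomials has coefficient sequence given by the convolution below.\<close>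

definition central :: "'a::ring \<Rightarrow> bool" where
  "central c \<longleftrightarrow> (\<forall>z. c * z = z * c)"

definition pmult :: "(nat \<Rightarrow> 'a::ring) \<Rightarrow> (nat \<Rightarrow> 'a) \<Rightarrow> nat \<Rightarrow> 'a" where
  "pmult u v t = (\<Sum>i\<le>t. u i * v (t - i))"

definition has_degree :: "(nat \<Rightarrow> 'a::zero) \<Rightarrow> nat \<Rightarrow> bool" where
  "has_degree u d \<longleftrightarrow> u d \<noteq> 0 \<and> (\<forall>i>d. u i = 0)"

definition bipair :: "(nat \<Rightarrow> nat \<Rightarrow> 'a::ring) \<Rightarrow> nat \<Rightarrow> (nat \<Rightarrow> 'a) \<Rightarrow> nat \<Rightarrow> (nat \<Rightarrow> 'a) \<Rightarrow> 'a" where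
  "bipair I dp u dq v = (\<Sum>i\<le>dp. \<Sum>j\<le>dq. u i * I i j * v j)"

end

theory Submission
  imports Defs
begin

(* For every u of degree at most k, the moment relation and the centrality of the b_j give
     <u f, v> = (sum_r u_r alpha_r) (sum_s beta_s v_s) - sum_j <u, y^j v> b_j.
   For u = pi_k^-1 p_k - pi_(k-1)^-1 p_(k-1) the first factor vanishes by the choice of pi,
   and u is orthogonal to every polynomial of degree at most k - 2.  Hence the coefficient
   <u f, q_l> of p_l in the expansion of u f vanishes as soon as l + m <= k - 2.
   The recurrence for the q_k is the same statement over the opposite ring, where the roles
   of x and y, and of f and g, are exchanged. *)

datatype 'a opposite = Opp (unopp: 'a)

instantiation opposite :: (division_ring) division_ring
begin

definition "0 = Opp 0"
definition "1 = Opp 1"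
definition "x + y = Opp (unopp x + unopp y)"
definition "x - y = Opp (unopp x - unopp y)"
definition "- x = Opp (- unopp x)"
definition "x * y = Opp (unopp y * unopp x)"
definition "inverse x = Opp (inverse (unopp x))"
definition "divide x y = Opp (inverse (unopp y) * unopp (x :: 'a opposite))"

instance
proof
  have nz: "x \<noteq> 0 \<Longrightarrow> unopp x \<noteq> 0" for x :: "'a opposite"
    by (cases x) (simp add: zero_opposite_def)
  show "x \<noteq> 0 \<Longrightarrow> inverse x * x = 1" "x \<noteq> 0 \<Longrightarrow> x * inverse x = 1" for x :: "'a opposite"
    using nz[of x] by (simp_all add: times_opposite_def inverse_opposite_def one_opposite_def)
qed (auto simp: zero_opposite_def one_opposite_def plus_opposite_def minus_opposite_def
       uminus_opposite_def times_opposite_def inverse_opposite_def divide_opposite_def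
       algebra_simps opposite.expand)

end

lemma Opp_0 [simp]: "Opp 0 = 0"
  by (simp add: zero_opposite_def)

lemma Opp_1 [simp]: "Opp 1 = 1"
  by (simp add: one_opposite_def)

lemma Opp_eq_0_iff [simp]: "Opp x = 0 \<longleftrightarrow> x = 0"
  by (metis Opp_0 opposite.inject)

lemma Opp_add [simp]: "Opp x + Opp y = Opp (x + y)"
  by (simp add: plus_opposite_def)

lemma Opp_diff [simp]: "Opp x - Opp y = Opp (x - y)"
  by (simp add: minus_opposite_def)

lemma Opp_mult [simp]: "Opp x * Opp y = Opp (y * x)"
  by (simp add: times_opposite_def)

lemma Opp_inverse [simp]: "inverse (Opp x) = Opp (inverse x)"
  by (simp add: inverse_opposite_def)

lemma sum_Opp [simp]: "(\<Sum>i\<in>A. Opp (f i)) = Opp (sum f A)"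
  by (induction A rule: infinite_finite_induct) simp_all

lemma central_Opp_iff [simp]: "central (Opp c) \<longleftrightarrow> central c"
  unfolding central_def by (metis Opp_mult opposite.collapse opposite.inject)

lemma has_degree_Opp_iff [simp]: "has_degree (\<lambda>i. Opp (u i)) d \<longleftrightarrow> has_degree u d"
  by (simp add: has_degree_def)

lemma pmult_Opp: "pmult (\<lambda>i. Opp (u i)) (\<lambda>i. Opp (v i)) t = Opp (pmult v u t)"
proof -
  have "(\<Sum>i\<le>t. v (t - i) * u i) = pmult v u t"
    unfolding pmult_def by (rule sum.reindex_bij_witness[where i="\<lambda>i. t - i" and j="\<lambda>i. t - i"]) auto
  then show ?thesis by (simp add: pmult_def)
qed

lemma bipair_Opp:
  "bipair (\<lambda>r s. Opp (I s r)) k (\<lambda>i. Opp (v i)) l (\<lambda>j. Opp (u j)) = Opp (bipair I l u k v)"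
  unfolding bipair_def by (subst sum.swap) (simp add: mult.assoc)

lemma pmult_eq_double_sum:
  fixes u v :: "nat \<Rightarrow> 'a::ring"
  assumes u: "\<forall>i>du. u i = 0" and v: "\<forall>j>dv. v j = 0"
  shows "pmult u v t = (\<Sum>r\<le>du. \<Sum>j\<le>dv. if r + j = t then u r * v j else 0)"
proof -
  have "(\<Sum>r\<le>du. \<Sum>j\<le>dv. if r + j = t then u r * v j else 0)
      = (\<Sum>r\<le>du. if r \<le> t \<and> t - r \<le> dv then u r * v (t - r) else 0)"
  proof (rule sum.cong[OF refl])
    fix r
    have "(\<Sum>j\<le>dv. if r + j = t then u r * v j else 0)
        = (\<Sum>j\<le>dv. if j = t - r \<and> r \<le> t then u r * v j else 0)"
      by (rule sum.cong) auto
    then show "(\<Sum>j\<le>dv. if r + j = t then u r * v j else 0)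
        = (if r \<le> t \<and> t - r \<le> dv then u r * v (t - r) else 0)"
      by (cases "r \<le> t") (auto simp: sum.delta)
  qed
  also have "\<dots> = (\<Sum>r\<le>max du t. if r \<le> t \<and> t - r \<le> dv \<and> r \<le> du then u r * v (t - r) else 0)"
    by (rule sum.mono_neutral_cong_left) auto
  also have "\<dots> = (\<Sum>r\<le>t. u r * v (t - r))"
    by (rule sum.mono_neutral_cong_right) (use u v in \<open>auto simp: not_le\<close>)
  finally show ?thesis
    unfolding pmult_def by simp
qed

lemma pmult_eq_0_above_degree:
  fixes u v :: "nat \<Rightarrow> 'a::ring"
  assumes "\<forall>i>du. u i = 0" and "\<forall>j>dv. v j = 0" and "du + dv < t"
  shows "pmult u v t = 0"
  unfolding pmult_eq_double_sum[OF assms(1,2)] using assms(3) by (intro sum.neutral ballI) auto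

lemma sum_pmult_mult:
  fixes u v :: "nat \<Rightarrow> 'a::ring"
  assumes "\<forall>i>du. u i = 0" and "\<forall>j>dv. v j = 0" and "du + dv \<le> M"
  shows "(\<Sum>t\<le>M. pmult u v t * Y t) = (\<Sum>r\<le>du. \<Sum>j\<le>dv. u r * v j * Y (r + j))"
proof -
  have "(\<Sum>t\<le>M. pmult u v t * Y t)
      = (\<Sum>t\<le>M. \<Sum>r\<le>du. \<Sum>j\<le>dv. if r + j = t then u r * v j * Y t else 0)"
    unfolding pmult_eq_double_sum[OF assms(1,2)] by (auto simp: sum_distrib_right intro!: sum.cong)
  also have "\<dots> = (\<Sum>r\<le>du. \<Sum>j\<le>dv. \<Sum>t\<le>M. if r + j = t then u r * v j * Y t else 0)"
    by (subst sum.swap) (simp add: sum.swap[of _ "{..M}"])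
  also have "\<dots> = (\<Sum>r\<le>du. \<Sum>j\<le>dv. u r * v j * Y (r + j))"
    using assms(3) by (intro sum.cong refl) (auto simp: sum.delta)
  finally show ?thesis .
qed

definition shift :: "nat \<Rightarrow> (nat \<Rightarrow> 'a::zero) \<Rightarrow> nat \<Rightarrow> 'a" where
  "shift j v s = (if j \<le> s then v (s - j) else 0)"

lemma sum_shift:
  fixes f v :: "nat \<Rightarrow> 'a::semiring_0"
  shows "(\<Sum>s\<le>d. f (s + j) * v s) = (\<Sum>s\<le>d + j. f s * shift j v s)"
proof -
  have "(\<Sum>s\<le>d + j. f s * shift j v s) = (\<Sum>s\<in>{j..d + j}. f s * v (s - j))"
    by (rule sum.mono_neutral_cong_right) (auto simp: shift_def)
  also have "\<dots> = (\<Sum>s\<le>d. f (s + j) * v s)"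
    using sum.shift_bounds_cl_nat_ivl[of "\<lambda>s. f s * v (s - j)" 0 j d] by (simp add: atLeast0AtMost)
  finally show ?thesis ..
qed

lemma graded_expansion:
  fixes p :: "nat \<Rightarrow> nat \<Rightarrow> 'a::division_ring"
  assumes deg: "\<And>k. has_degree (p k) k" and "\<forall>t>N. v t = 0"
  shows "\<exists>c. \<forall>t. v t = (\<Sum>i\<le>N. c i * p i t)"
  using assms(2)
proof (induction N arbitrary: v)
  case 0
  show ?case
  proof (intro exI allI)
    fix t
    show "v t = (\<Sum>i\<le>0. (\<lambda>_. v 0 * inverse (p 0 0)) i * p i t)"
      using 0 deg[of 0] by (cases t) (auto simp: has_degree_def mult.assoc)
  qed
next
  case (Suc N)
  define c' where "c' = v (Suc N) * inverse (p (Suc N) (Suc N))"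
  have "\<forall>t>N. v t - c' * p (Suc N) t = 0"
  proof (intro allI impI)
    fix t assume "N < t"
    then consider "t = Suc N" | "Suc N < t" by linarith
    then show "v t - c' * p (Suc N) t = 0"
      by cases (use Suc.prems deg[of "Suc N"] in \<open>auto simp: c'_def mult.assoc has_degree_def\<close>)
  qed
  then obtain c where c: "\<And>t. v t - c' * p (Suc N) t = (\<Sum>i\<le>N. c i * p i t)"
    using Suc.IH[of "\<lambda>t. v t - c' * p (Suc N) t"] by blast
  have "v t = (\<Sum>i\<le>Suc N. (c(Suc N := c')) i * p i t)" for t
  proof -
    have "(\<Sum>i\<le>N. (c(Suc N := c')) i * p i t) = (\<Sum>i\<le>N. c i * p i t)"
      by (rule sum.cong) auto
    then show ?thesis
      using c[of t] by (simp add: diff_eq_eq)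
  qed
  then show ?case by blast
qed

lemma graded_expansion_right:
  fixes q :: "nat \<Rightarrow> nat \<Rightarrow> 'a::division_ring"
  assumes "\<And>k. has_degree (q k) k" and "\<forall>t>N. v t = 0"
  shows "\<exists>c. \<forall>t. v t = (\<Sum>i\<le>N. q i t * c i)"
proof -
  obtain c where "\<forall>t. Opp (v t) = (\<Sum>i\<le>N. c i * Opp (q i t))"
    using graded_expansion[of "\<lambda>k i. Opp (q k i)" N "\<lambda>t. Opp (v t)"] assms by auto
  then have "\<forall>t. Opp (v t) = Opp (\<Sum>i\<le>N. q i t * unopp (c i))"
    by (metis (no_types, lifting) Opp_mult opposite.collapse sum.cong sum_Opp)
  then show ?thesis by auto
qed

lemma bipair_sum_left:
  "bipair I dp (\<lambda>t. \<Sum>i\<in>S. c i * w i t) dq v = (\<Sum>i\<in>S. c i * bipair I dp (w i) dq v)"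
  unfolding bipair_def by (simp add: sum_distrib_left sum_distrib_right mult.assoc sum.swap[of _ S])

lemma bipair_sum_right:
  "bipair I dp u dq (\<lambda>t. \<Sum>i\<in>S. w i t * c i) = (\<Sum>i\<in>S. bipair I dp u dq (w i) * c i)"
  unfolding bipair_def by (simp add: sum_distrib_left sum_distrib_right mult.assoc sum.swap[of _ S])

lemma bipair_diff_left:
  "bipair I dp (\<lambda>t. c * u t - c' * u' t) dq v = c * bipair I dp u dq v - c' * bipair I dp u' dq v"
  unfolding bipair_def by (simp add: sum_distrib_left algebra_simps sum_subtractf)

lemma bipair_degree_left:
  assumes "\<forall>t>d. u t = 0" and "d \<le> D"
  shows "bipair I D u dq v = bipair I d u dq v"
  unfolding bipair_def by (rule sum.mono_neutral_right) (use assms in auto)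

lemma bipair_degree_right:
  assumes "\<forall>t>d. v t = 0" and "d \<le> D"
  shows "bipair I dp u D v = bipair I dp u d v"
  unfolding bipair_def by (intro sum.cong refl sum.mono_neutral_right) (use assms in auto)

lemma bipair_pmult_left:
  assumes "\<forall>r>du. u r = 0" and "\<forall>i>dw. w i = 0"
  shows "bipair I (du + dw) (pmult u w) d v
       = (\<Sum>r\<le>du. \<Sum>s\<le>d. u r * (\<Sum>i\<le>dw. w i * I (r + i) s) * v s)"
proof -
  have "bipair I (du + dw) (pmult u w) d v = (\<Sum>t\<le>du + dw. pmult u w t * (\<Sum>s\<le>d. I t s * v s))"
    unfolding bipair_def by (simp add: sum_distrib_left mult.assoc)
  also have "\<dots> = (\<Sum>r\<le>du. \<Sum>i\<le>dw. u r * w i * (\<Sum>s\<le>d. I (r + i) s * v s))"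
    using assms by (rule sum_pmult_mult) simp
  also have "\<dots> = (\<Sum>r\<le>du. \<Sum>s\<le>d. u r * (\<Sum>i\<le>dw. w i * I (r + i) s) * v s)"
    by (simp add: sum_distrib_left sum_distrib_right mult.assoc sum.swap[of _ "{..d}"])
  finally show ?thesis .
qed

lemma bipair_pmult_moments:
  fixes I :: "nat \<Rightarrow> nat \<Rightarrow> 'a::ring"
  assumes b_central: "\<And>j. j \<le> m \<Longrightarrow> central (b j)"
    and moments: "\<And>r s. (\<Sum>i\<le>n. a i * I (r + i) s) + (\<Sum>j\<le>m. I r (s + j) * b j) = \<alpha> r * \<beta> s"
    and u: "\<forall>r>k. u r = 0"
  shows "bipair I (k + n) (pmult u (\<lambda>i. if i \<le> n then a i else 0)) d v
       = (\<Sum>r\<le>k. u r * \<alpha> r) * (\<Sum>s\<le>d. \<beta> s * v s)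
         - (\<Sum>j\<le>m. bipair I k u (d + j) (shift j v) * b j)"
proof -
  have pointwise: "u r * (\<Sum>i\<le>n. a i * I (r + i) s) * v s
      = u r * \<alpha> r * (\<beta> s * v s) - (\<Sum>j\<le>m. u r * I r (s + j) * v s * b j)" for r s
  proof -
    have "(\<Sum>i\<le>n. a i * I (r + i) s) = \<alpha> r * \<beta> s - (\<Sum>j\<le>m. I r (s + j) * b j)"
      using moments[of r s] by (simp add: eq_diff_eq)
    then have "u r * (\<Sum>i\<le>n. a i * I (r + i) s) * v s
        = u r * \<alpha> r * (\<beta> s * v s) - (\<Sum>j\<le>m. u r * I r (s + j) * (b j * v s))"
      by (simp add: right_diff_distrib left_diff_distrib mult.assoc sum_distrib_left sum_distrib_right)
    also have "(\<Sum>j\<le>m. u r * I r (s + j) * (b j * v s)) = (\<Sum>j\<le>m. u r * I r (s + j) * v s * b j)"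
      using b_central by (intro sum.cong refl) (simp add: central_def mult.assoc)
    finally show ?thesis .
  qed
  have shifted: "(\<Sum>r\<le>k. \<Sum>s\<le>d. u r * I r (s + j) * v s) = bipair I k u (d + j) (shift j v)" for j
    unfolding bipair_def by (simp only: sum_shift[where f="\<lambda>s. u r * I r s" for r])
  have "bipair I (k + n) (pmult u (\<lambda>i. if i \<le> n then a i else 0)) d v
      = (\<Sum>r\<le>k. \<Sum>s\<le>d. u r * (\<Sum>i\<le>n. a i * I (r + i) s) * v s)"
    by (subst bipair_pmult_left) (use u in auto)
  also have "\<dots> = (\<Sum>r\<le>k. \<Sum>s\<le>d. u r * \<alpha> r * (\<beta> s * v s) - (\<Sum>j\<le>m. u r * I r (s + j) * v s * b j))"
    by (simp add: pointwise)
  also have "\<dots> = (\<Sum>r\<le>k. \<Sum>s\<le>d. u r * \<alpha> r * (\<beta> s * v s))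
      - (\<Sum>r\<le>k. \<Sum>s\<le>d. \<Sum>j\<le>m. u r * I r (s + j) * v s * b j)"
    by (simp add: sum_subtractf)
  also have "(\<Sum>r\<le>k. \<Sum>s\<le>d. u r * \<alpha> r * (\<beta> s * v s)) = (\<Sum>r\<le>k. u r * \<alpha> r) * (\<Sum>s\<le>d. \<beta> s * v s)"
    by (rule sum_product[symmetric])
  also have "(\<Sum>r\<le>k. \<Sum>s\<le>d. \<Sum>j\<le>m. u r * I r (s + j) * v s * b j)
      = (\<Sum>j\<le>m. \<Sum>r\<le>k. \<Sum>s\<le>d. u r * I r (s + j) * v s * b j)"
    by (subst sum.swap) (subst (2) sum.swap, rule refl)
  finally show ?thesis
    by (simp add: shifted[symmetric] sum_distrib_right)
qed

locale biorthonormal =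
  fixes I :: "nat \<Rightarrow> nat \<Rightarrow> 'a::division_ring" and p q :: "nat \<Rightarrow> nat \<Rightarrow> 'a"
  assumes deg_p: "has_degree (p k) k" and deg_q: "has_degree (q k) k"
    and biorth: "bipair I k (p k) l (q l) = (if k = l then 1 else 0)"
begin

lemma p_eq_0_above_degree: "k < i \<Longrightarrow> p k i = 0"
  using deg_p by (simp add: has_degree_def)

lemma q_eq_0_above_degree: "k < i \<Longrightarrow> q k i = 0"
  using deg_q by (simp add: has_degree_def)

lemma coeff_eq_bipair:
  assumes v: "\<forall>t. v t = (\<Sum>i\<le>N. c i * p i t)" and "l \<le> N"
  shows "bipair I N v l (q l) = c l"
proof -
  have "v = (\<lambda>t. \<Sum>i\<le>N. c i * p i t)"
    using v by auto
  then have "bipair I N v l (q l) = (\<Sum>i\<le>N. c i * bipair I N (p i) l (q l))"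
    by (simp add: bipair_sum_left)
  also have "\<dots> = (\<Sum>i\<le>N. c i * bipair I i (p i) l (q l))"
  proof -
    have "bipair I N (p i) l (q l) = bipair I i (p i) l (q l)" if "i \<le> N" for i
      by (rule bipair_degree_left) (use that in \<open>auto simp: p_eq_0_above_degree\<close>)
    then show ?thesis by (intro sum.cong refl) simp
  qed
  also have "\<dots> = (\<Sum>i\<le>N. if i = l then c i else 0)"
    by (intro sum.cong refl) (simp add: biorth)
  also have "\<dots> = c l"
    using \<open>l \<le> N\<close> by simp
  finally show ?thesis .
qed

lemma bipair_p_lower_degree_eq_0:
  assumes "d < k"
  shows "bipair I k (p k) d v = 0"
proof -
  define v' where "v' j = (if j \<le> d then v j else 0)" for j
  obtain c where c: "\<forall>t. v' t = (\<Sum>i\<le>d. q i t * c i)"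
    using graded_expansion_right[OF deg_q, of d v'] by (auto simp: v'_def)
  have "bipair I k (p k) d v = bipair I k (p k) d v'"
    unfolding bipair_def v'_def by simp
  also have "v' = (\<lambda>t. \<Sum>i\<le>d. q i t * c i)"
    using c by auto
  also have "bipair I k (p k) d \<dots> = (\<Sum>i\<le>d. bipair I k (p k) d (q i) * c i)"
    by (rule bipair_sum_right)
  also have "\<dots> = (\<Sum>i\<le>d. bipair I k (p k) i (q i) * c i)"
  proof -
    have "bipair I k (p k) d (q i) = bipair I k (p k) i (q i)" if "i \<le> d" for i
      by (rule bipair_degree_right) (use that in \<open>auto simp: q_eq_0_above_degree\<close>)
    then show ?thesis by (intro sum.cong refl) simp
  qed
  also have "\<dots> = 0"
    using assms by (simp add: biorth)
  finally show ?thesis .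
qed

context
  fixes a b \<alpha> \<beta> :: "nat \<Rightarrow> 'a" and n m :: nat
  assumes b_central: "\<And>j. j \<le> m \<Longrightarrow> central (b j)"
    and moments: "\<And>r s. (\<Sum>i\<le>n. a i * I (r + i) s) + (\<Sum>j\<le>m. I r (s + j) * b j) = \<alpha> r * \<beta> s"
begin

lemma pmult_band_expansion:
  assumes u: "\<forall>r>k. u r = 0"
    and u_orth: "\<And>d v. d + 2 \<le> k \<Longrightarrow> bipair I k u d v = 0"
    and u_\<alpha>: "(\<Sum>r\<le>k. u r * \<alpha> r) = 0"
  shows "\<exists>A. \<forall>t. pmult u (\<lambda>i. if i \<le> n then a i else 0) t = (\<Sum>i\<in>{k - 1 - m..k + n}. A i * p i t)"
proof -
  let ?P = "pmult u (\<lambda>i. if i \<le> n then a i else 0)"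
  have "\<forall>t>k + n. ?P t = 0"
    using pmult_eq_0_above_degree[OF u, of n] by simp
  then obtain A where A: "\<forall>t. ?P t = (\<Sum>i\<le>k + n. A i * p i t)"
    using graded_expansion[OF deg_p] by blast
  have "A l = 0" if "l + m + 2 \<le> k" for l
  proof -
    have "A l = bipair I (k + n) ?P l (q l)"
      using coeff_eq_bipair[OF A] that by simp
    also have "\<dots> = (\<Sum>r\<le>k. u r * \<alpha> r) * (\<Sum>s\<le>l. \<beta> s * q l s)
        - (\<Sum>j\<le>m. bipair I k u (l + j) (shift j (q l)) * b j)"
      by (rule bipair_pmult_moments[OF b_central moments u])
    also have "\<dots> = 0"
      using u_\<alpha> u_orth that by simp
    finally show ?thesis .
  qed
  then have "?P t = (\<Sum>i\<in>{k - 1 - m..k + n}. A i * p i t)" for t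
    unfolding A[rule_format] by (intro sum.mono_neutral_right) auto
  then show ?thesis by blast
qed

lemma p_recurrence:
  assumes \<pi>: "\<And>k. \<pi> k = (\<Sum>i\<le>k. p k i * \<alpha> i)" and \<pi>_nz: "\<And>k. \<pi> k \<noteq> 0" and k: "1 \<le> k"
  shows "\<exists>A. \<forall>t. pmult (\<lambda>i. inverse (\<pi> k) * p k i - inverse (\<pi> (k - 1)) * p (k - 1) i)
                  (\<lambda>i. if i \<le> n then a i else 0) t
          = (\<Sum>i\<in>{k - 1 - m..k + n}. A i * p i t)"
proof (rule pmult_band_expansion)
  show "\<forall>r>k. inverse (\<pi> k) * p k r - inverse (\<pi> (k - 1)) * p (k - 1) r = 0"
    by (simp add: p_eq_0_above_degree)
  show "bipair I k (\<lambda>i. inverse (\<pi> k) * p k i - inverse (\<pi> (k - 1)) * p (k - 1) i) d v = 0"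
    if "d + 2 \<le> k" for d v
  proof -
    have "bipair I k (p (k - 1)) d v = bipair I (k - 1) (p (k - 1)) d v"
      by (rule bipair_degree_left) (auto simp: p_eq_0_above_degree)
    then show ?thesis
      using that by (simp add: bipair_diff_left bipair_p_lower_degree_eq_0)
  qed
  have "(\<Sum>r\<le>k. p (k - 1) r * \<alpha> r) = \<pi> (k - 1)"
    using k by (cases k) (simp_all add: \<pi> p_eq_0_above_degree)
  then show "(\<Sum>r\<le>k. (inverse (\<pi> k) * p k r - inverse (\<pi> (k - 1)) * p (k - 1) r) * \<alpha> r) = 0"
    by (simp add: left_diff_distrib sum_subtractf mult.assoc sum_distrib_left[symmetric] \<pi>[symmetric] \<pi>_nz)
qed

end

end

lemma biorthonormal_opposite:
  assumes "biorthonormal I p q"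
  shows "biorthonormal (\<lambda>r s. Opp (I s r)) (\<lambda>k i. Opp (q k i)) (\<lambda>k i. Opp (p k i))"
proof -
  interpret biorthonormal I p q by (fact assms)
  show ?thesis
    by unfold_locales (simp_all add: deg_p deg_q bipair_Opp biorth)
qed

lemma (in biorthonormal) q_recurrence:
  fixes a b \<alpha> \<beta> \<eta> :: "nat \<Rightarrow> 'a" and n m :: nat
  assumes a_central: "\<And>i. i \<le> n \<Longrightarrow> central (a i)"
    and moments: "\<And>r s. (\<Sum>i\<le>n. a i * I (r + i) s) + (\<Sum>j\<le>m. I r (s + j) * b j) = \<alpha> r * \<beta> s"
    and \<eta>: "\<And>k. \<eta> k = (\<Sum>i\<le>k. \<beta> i * q k i)" and \<eta>_nz: "\<And>k. \<eta> k \<noteq> 0" and k: "1 \<le> k"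
  shows "\<exists>B. \<forall>t. pmult (\<lambda>j. if j \<le> m then b j else 0)
                  (\<lambda>i. q k i * inverse (\<eta> k) - q (k - 1) i * inverse (\<eta> (k - 1))) t
          = (\<Sum>i\<in>{k - 1 - n..k + m}. q i t * B i)"
proof -
  interpret opp: biorthonormal "\<lambda>r s. Opp (I s r)" "\<lambda>k i. Opp (q k i)" "\<lambda>k i. Opp (p k i)"
    using biorthonormal_opposite biorthonormal_axioms .
  have opp_central: "central (Opp (a i))" if "i \<le> n" for i
    using a_central that by simp
  have opp_moments: "(\<Sum>i\<le>m. Opp (b i) * Opp (I s (r + i))) + (\<Sum>j\<le>n. Opp (I (s + j) r) * Opp (a j))
      = Opp (\<beta> r) * Opp (\<alpha> s)" for r s
    using moments[of s r] by (simp add: add.commute)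
  have opp_\<eta>: "Opp (\<eta> k) = (\<Sum>i\<le>k. Opp (q k i) * Opp (\<beta> i))" for k
    by (simp add: \<eta>)
  obtain A where A: "\<forall>t. pmult (\<lambda>i. inverse (Opp (\<eta> k)) * Opp (q k i) - inverse (Opp (\<eta> (k - 1))) * Opp (q (k - 1) i))
                  (\<lambda>i. if i \<le> m then Opp (b i) else 0) t
          = (\<Sum>i\<in>{k - 1 - n..k + m}. A i * Opp (q i t))"
    using opp.p_recurrence[where a="\<lambda>i. Opp (b i)" and b="\<lambda>i. Opp (a i)" and \<alpha>="\<lambda>i. Opp (\<beta> i)"
        and \<beta>="\<lambda>i. Opp (\<alpha> i)" and n=m and m=n and \<pi>="\<lambda>k. Opp (\<eta> k)" and k=k,
        OF opp_central opp_moments opp_\<eta>] \<eta>_nz k by auto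
  have "Opp (pmult (\<lambda>j. if j \<le> m then b j else 0)
                  (\<lambda>i. q k i * inverse (\<eta> k) - q (k - 1) i * inverse (\<eta> (k - 1))) t)
      = Opp (\<Sum>i\<in>{k - 1 - n..k + m}. q i t * unopp (A i))" for t
  proof -
    have "(\<lambda>i. if i \<le> m then Opp (b i) else 0) = (\<lambda>i. Opp (if i \<le> m then b i else 0))"
      by auto
    moreover have "A i * Opp (q i t) = Opp (q i t * unopp (A i))" for i
      by (metis Opp_mult opposite.collapse)
    ultimately show ?thesis
      using A[rule_format, of t] by (simp add: pmult_Opp)
  qed
  then show ?thesis by auto
qed

theorem mainTheorem3:
  fixes I :: "nat \<Rightarrow> nat \<Rightarrow> 'a::division_ring"
    and p q :: "nat \<Rightarrow> nat \<Rightarrow> 'a"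
    and a b :: "nat \<Rightarrow> 'a" and n m :: nat
    and \<alpha> \<beta> \<pi> \<eta> :: "nat \<Rightarrow> 'a"
  assumes deg_p: "\<forall>k. has_degree (p k) k"
    and deg_q: "\<forall>k. has_degree (q k) k"
    and biorth: "\<forall>k l. bipair I k (p k) l (q l) = (if k = l then 1 else 0)"
    and a_central: "\<forall>i\<le>n. central (a i)"
    and b_central: "\<forall>j\<le>m. central (b j)"
    and moments: "\<forall>r s. (\<Sum>i\<le>n. a i * I (r + i) s) + (\<Sum>j\<le>m. I r (s + j) * b j) = \<alpha> r * \<beta> s"
    and \<pi>_def: "\<forall>k. \<pi> k = (\<Sum>i\<le>k. p k i * \<alpha> i)"
    and \<eta>_def: "\<forall>k. \<eta> k = (\<Sum>i\<le>k. \<beta> i * q k i)"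
    and \<pi>_nz: "\<forall>k. \<pi> k \<noteq> 0"
    and \<eta>_nz: "\<forall>k. \<eta> k \<noteq> 0"
  shows "\<forall>k\<ge>1. \<exists>A B :: nat \<Rightarrow> 'a.
     (\<forall>t. pmult (\<lambda>i. inverse (\<pi> k) * p k i - inverse (\<pi> (k - 1)) * p (k - 1) i)
                  (\<lambda>i. if i \<le> n then a i else 0) t
          = (\<Sum>i\<in>{k - 1 - m..k + n}. A i * p i t))
   \<and> (\<forall>t. pmult (\<lambda>j. if j \<le> m then b j else 0)
                  (\<lambda>i. q k i * inverse (\<eta> k) - q (k - 1) i * inverse (\<eta> (k - 1))) t
          = (\<Sum>i\<in>{k - 1 - n..k + m}. q i t * B i))"
proof (intro allI impI, goal_cases)
  case (1 k)
  interpret biorthonormal I p q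
    using deg_p deg_q biorth by unfold_locales blast+
  show ?case
    using p_recurrence[where a=a and b=b and \<alpha>=\<alpha> and \<beta>=\<beta> and n=n and m=m and \<pi>=\<pi> and k=k]
      q_recurrence[where a=a and b=b and \<alpha>=\<alpha> and \<beta>=\<beta> and n=n and m=m and \<eta>=\<eta> and k=k]
      a_central b_central moments \<pi>_def \<eta>_def \<pi>_nz \<eta>_nz 1 by blast
qed

end
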